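(* For every odd integer $n\ge 3$ there exist a boolean classifier $\kappa:\{0,1\}^n\to\{0,1\}$ and a point $\mathbf v\in\{0,1\}^n$ such that, for the sample $(\mathbf v,\kappa(\mathbf v))$, some feature $i\in\mathcal F=\{1,\dots,n\}$ is relevant and $\mathrm{Sv}(i)=0$ (issue I3).
   Context: Let $\mathcal F=\{1,\dots,n\}$. A boolean classifier is a non-constant function $\kappa:\{0,1\}^n\to\{0,1\}$; a sample is a pair $(\mathbf v,c)$ with $\mathbf v\in\{0,1\}^n$ and $c=\kappa(\mathbf v)$. For $\mathcal S\subseteq\mathcal F$ let $\Upsilon(\mathcal S;\mathbf v)=\{\mathbf x\in\{0,1\}^n : x_j=v_j \text{ for all } j\in\mathcal S\}$ and, for any function $g$ on $\{0,1\}^n$, $\mathbf E[g\mid \mathbf x_{\mathcal S}=\mathbf v_{\mathcal S}]=|\Upsilon(\mathcal S;\mathbf v)|^{-1}\sum_{\mathbf x\in\Upsilon(\mathcal S;\mathbf v)}g(\mathbf x)$ (uniform distribution, independent features). The characteristic function is $\upsilon(\mathcal S)=\mathbf E[\kappa\mid\mathbf x_{\mathcal S}=\mathbf v_{\mathcal S}]$, and the SHAP score of feature $i$ is $\mathrm{Sv}(i)=\sum_{\mathcal S\subseteq\mathcal F\setminus\{i\}}\frac{|\mathcal S|!\,(n-|\mathcal S|-1)!}{n!}\big(\upsilon(\mathcal S\cup\{i\})-\upsilon(\mathcal S)\big)$. The similarity predicate is $\sigma(\mathbf x)=1$ if $\kappa(\mathbf x)=\kappa(\mathbf v)$ and $0$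 otherwise. A set $\mathcal S\subseteq\mathcal F$ is a weak abductive explanation (WAXp) if $\mathbf E[\sigma\mid\mathbf x_{\mathcal S}=\mathbf v_{\mathcal S}]=1$ (i.e. $\kappa(\mathbf x)=\kappa(\mathbf v)$ for all $\mathbf x\in\Upsilon(\mathcal S;\mathbf v)$); an abductive explanation (AXp) is a WAXp $\mathcal S$ such that $\mathcal S\setminus\{t\}$ is not a WAXp for every $t\in\mathcal S$. A feature is relevant if it belongs to at least one AXp, and irrelevant otherwise. *)

theory Defs
  imports "HOL-Library.FuncSet" Complex_Main
begin

text \<open>Features are 1..n; a point of {0,1}^n is an extensional function
  on {1..n} with boolean values (True = 1). A classifier maps points to
  booleans (True = 1); values outside the point set are irrelevant.\<close>

definition points :: "nat \<Rightarrow> (nat \<Rightarrow> bool) set" where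
  "points n = PiE {1..n} (\<lambda>_. UNIV)"

definition feats :: "nat \<Rightarrow> nat set" where
  "feats n = {1..n}"

definition is_classifier :: "nat \<Rightarrow> ((nat \<Rightarrow> bool) \<Rightarrow> bool) \<Rightarrow> bool" where
  "is_classifier n \<kappa> \<longleftrightarrow> (\<exists>x\<in>points n. \<exists>y\<in>points n. \<kappa> x \<noteq> \<kappa> y)"

definition Upsilon :: "nat \<Rightarrow> nat set \<Rightarrow> (nat \<Rightarrow> bool) \<Rightarrow> (nat \<Rightarrow> bool) set" where
  "Upsilon n S v = {x \<in> points n. \<forall>j\<in>S. x j = v j}"

definition cond_exp :: "nat \<Rightarrow> ((nat \<Rightarrow> bool) \<Rightarrow> real) \<Rightarrow> nat set \<Rightarrow> (nat \<Rightarrow> bool) \<Rightarrow> real" where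
  "cond_exp n g S v = (\<Sum>x\<in>Upsilon n S v. g x) / real (card (Upsilon n S v))"

definition charfn :: "nat \<Rightarrow> ((nat \<Rightarrow> bool) \<Rightarrow> bool) \<Rightarrow> (nat \<Rightarrow> bool) \<Rightarrow> nat set \<Rightarrow> real" where
  "charfn n \<kappa> v S = cond_exp n (\<lambda>x. if \<kappa> x then 1 else 0) S v"

definition shap :: "nat \<Rightarrow> ((nat \<Rightarrow> bool) \<Rightarrow> bool) \<Rightarrow> (nat \<Rightarrow> bool) \<Rightarrow> nat \<Rightarrow> real" where
  "shap n \<kappa> v i = (\<Sum>S\<in>Pow (feats n - {i}).
     (fact (card S) * fact (n - card S - 1) / fact n) *
     (charfn n \<kappa> v (insert i S) - charfn n \<kappa> v S))"

definition sim :: "((nat \<Rightarrow> bool) \<Rightarrow> bool) \<Rightarrow> (nat \<Rightarrow> bool) \<Rightarrow> (nat \<Rightarrow> bool) \<Rightarrow> real" where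
  "sim \<kappa> v x = (if \<kappa> x = \<kappa> v then 1 else 0)"

definition WAXp :: "nat \<Rightarrow> ((nat \<Rightarrow> bool) \<Rightarrow> bool) \<Rightarrow> (nat \<Rightarrow> bool) \<Rightarrow> nat set \<Rightarrow> bool" where
  "WAXp n \<kappa> v S \<longleftrightarrow> S \<subseteq> feats n \<and> cond_exp n (sim \<kappa> v) S v = 1"

definition AXp :: "nat \<Rightarrow> ((nat \<Rightarrow> bool) \<Rightarrow> bool) \<Rightarrow> (nat \<Rightarrow> bool) \<Rightarrow> nat set \<Rightarrow> bool" where
  "AXp n \<kappa> v S \<longleftrightarrow> WAXp n \<kappa> v S \<and> (\<forall>t\<in>S. \<not> WAXp n \<kappa> v (S - {t}))"

definition relevant :: "nat \<Rightarrow> ((nat \<Rightarrow> bool) \<Rightarrow> bool) \<Rightarrow> (nat \<Rightarrow> bool) \<Rightarrow> nat \<Rightarrow> bool" where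
  "relevant n \<kappa> v i \<longleftrightarrow> (\<exists>S. AXp n \<kappa> v S \<and> i \<in> S)"

end

theory Submission
  imports Defs "HOL-Combinatorics.Permutations"
begin

text \<open>Take kappa(x) = [x2 \<noteq> x1 \<and> x3 = x1] at the all-ones point v, where kappa(v) = 0.
  Fixing x1 = x2 = 1 forces kappa = 0 while neither feature alone does, so {1,2} is an
  abductive explanation and feature 1 is relevant. On the other hand, swapping features 2
  and 3 fixes v and changes kappa exactly as negating x1 does. As the marginal contribution
  of feature i to S is half the difference of the averages of kappa and of kappa with x_i
  negated over the points agreeing with v on S \<union> {i}, the swap sends the contribution to S
  to minus the contribution to the swapped set, which has the same size. Hence the terms of
  the Shapley sum cancel in pairs.\<close>

lemma points_finite: "finite (points n)"
  by (simp add: points_def finite_PiE)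

lemma Upsilon_subset_points: "Upsilon n S v \<subseteq> points n"
  by (auto simp: Upsilon_def)

lemma Upsilon_finite: "finite (Upsilon n S v)"
  using points_finite Upsilon_subset_points by (rule finite_subset[rotated])

lemma fun_upd_in_points: "x \<in> points n \<Longrightarrow> i \<in> feats n \<Longrightarrow> x(i := b) \<in> points n"
  by (auto simp: points_def feats_def PiE_iff extensional_def)

lemma comp_permutes_in_points:
  assumes "\<tau> permutes feats n" and "x \<in> points n"
  shows "x \<circ> \<tau> \<in> points n"
  using assms permutes_not_in[OF assms(1)]
  by (auto simp: points_def feats_def PiE_iff extensional_def)

lemma cond_exp_cong:
  "(\<And>x. x \<in> Upsilon n S v \<Longrightarrow> g x = h x) \<Longrightarrow> cond_exp n g S v = cond_exp n h S v"
  by (simp add: cond_exp_def)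

lemma cond_exp_eq_1_iff:
  assumes "Upsilon n S v \<noteq> {}" and "\<And>x. x \<in> Upsilon n S v \<Longrightarrow> g x \<le> 1"
  shows "cond_exp n g S v = 1 \<longleftrightarrow> (\<forall>x\<in>Upsilon n S v. g x = 1)"
proof -
  let ?U = "Upsilon n S v"
  have "card ?U > 0"
    using assms(1) Upsilon_finite by (simp add: card_gt_0_iff)
  then have "cond_exp n g S v = 1 \<longleftrightarrow> (\<Sum>x\<in>?U. 1 - g x) = 0"
    by (simp add: cond_exp_def sum_subtractf)
  also have "\<dots> \<longleftrightarrow> (\<forall>x\<in>?U. g x = 1)"
    using assms(2) Upsilon_finite by (subst sum_nonneg_eq_0_iff) auto
  finally show ?thesis .
qed

lemma WAXp_iff:
  assumes "v \<in> points n"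
  shows "WAXp n \<kappa> v S \<longleftrightarrow> S \<subseteq> feats n \<and> (\<forall>x\<in>Upsilon n S v. \<kappa> x = \<kappa> v)"
proof -
  have "v \<in> Upsilon n S v"
    using assms by (simp add: Upsilon_def)
  then show ?thesis
    unfolding WAXp_def by (subst cond_exp_eq_1_iff) (auto simp: sim_def)
qed

definition flip :: "nat \<Rightarrow> (nat \<Rightarrow> bool) \<Rightarrow> nat \<Rightarrow> bool" where
  "flip i x = x(i := \<not> x i)"

lemma flip_flip [simp]: "flip i (flip i x) = x"
  by (auto simp: flip_def)

lemma inj_flip: "inj (flip i)"
  by (metis flip_flip injI)

lemma flip_in_points: "x \<in> points n \<Longrightarrow> i \<in> feats n \<Longrightarrow> flip i x \<in> points n"
  by (simp add: flip_def fun_upd_in_points)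

lemma Upsilon_split_flip:
  assumes "i \<in> feats n" and "i \<notin> S"
  shows "Upsilon n S v = Upsilon n (insert i S) v \<union> flip i ` Upsilon n (insert i S) v"
proof (intro equalityI subsetI)
  fix x assume x: "x \<in> Upsilon n S v"
  show "x \<in> Upsilon n (insert i S) v \<union> flip i ` Upsilon n (insert i S) v"
  proof (cases "x i = v i")
    case False
    then have "flip i x \<in> Upsilon n (insert i S) v"
      using x assms fun_upd_in_points by (auto simp: Upsilon_def flip_def)
    then show ?thesis
      by (metis UnI2 flip_flip imageI)
  qed (use x in \<open>auto simp: Upsilon_def\<close>)
qed (use assms fun_upd_in_points in \<open>auto simp: Upsilon_def flip_def split: if_splits\<close>)

lemma cond_exp_split_flip:
  assumes "i \<in> feats n" and "i \<notin> S"
  shows "cond_exp n g S v =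
    (cond_exp n g (insert i S) v + cond_exp n (g \<circ> flip i) (insert i S) v) / 2"
proof -
  let ?U = "Upsilon n (insert i S) v"
  have disj: "?U \<inter> flip i ` ?U = {}"
    by (auto simp: Upsilon_def flip_def)
  have fin: "finite ?U" "finite (flip i ` ?U)"
    using Upsilon_finite by auto
  have "sum g (Upsilon n S v) = sum g ?U + sum (g \<circ> flip i) ?U"
    unfolding Upsilon_split_flip[OF assms]
    by (simp add: sum.union_disjoint[OF fin disj] sum.reindex[OF inj_on_subset[OF inj_flip]])
  moreover have "card (Upsilon n S v) = 2 * card ?U"
    unfolding Upsilon_split_flip[OF assms]
    by (simp add: card_Un_disjoint[OF fin disj] card_image[OF inj_on_subset[OF inj_flip]])
  ultimately show ?thesis
    by (cases "card ?U = 0") (auto simp: cond_exp_def field_simps)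
qed

lemma Upsilon_permute:
  assumes \<tau>: "\<tau> permutes feats n" and v: "\<And>j. v (\<tau> j) = v j"
  shows "Upsilon n T v = (\<lambda>x. x \<circ> \<tau>) ` Upsilon n (\<tau> ` T) v"
proof (intro equalityI subsetI)
  fix y assume y: "y \<in> Upsilon n T v"
  have "y \<circ> inv \<tau> \<in> Upsilon n (\<tau> ` T) v"
    using y v comp_permutes_in_points[OF permutes_inv[OF \<tau>]]
    by (auto simp: Upsilon_def permutes_inverses[OF \<tau>])
  moreover have "y = y \<circ> inv \<tau> \<circ> \<tau>"
    by (simp add: o_assoc[symmetric] permutes_inv_o[OF \<tau>])
  ultimately show "y \<in> (\<lambda>x. x \<circ> \<tau>) ` Upsilon n (\<tau> ` T) v"
    by blast
qed (use v comp_permutes_in_points[OF \<tau>] in \<open>auto simp: Upsilon_def\<close>)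

lemma cond_exp_permute:
  assumes \<tau>: "\<tau> permutes feats n" and v: "\<And>j. v (\<tau> j) = v j"
  shows "cond_exp n g T v = cond_exp n (\<lambda>x. g (x \<circ> \<tau>)) (\<tau> ` T) v"
proof -
  have inj: "inj (\<lambda>x. x \<circ> \<tau>)"
    by (metis (no_types, lifting) injI o_assoc permutes_inv_o(1)[OF \<tau>] comp_id)
  let ?U = "Upsilon n (\<tau> ` T) v"
  have "sum g (Upsilon n T v) = (\<Sum>x\<in>?U. g (x \<circ> \<tau>))"
    unfolding Upsilon_permute[of \<tau> n v T, OF \<tau> v]
    by (rule sum.reindex_cong[OF inj_on_subset[OF inj subset_UNIV] refl refl])
  moreover have "card (Upsilon n T v) = card ?U"
    unfolding Upsilon_permute[of \<tau> n v T, OF \<tau> v]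
    by (rule card_image[OF inj_on_subset[OF inj subset_UNIV]])
  ultimately show ?thesis
    by (simp add: cond_exp_def)
qed

lemma flip_comp:
  assumes "inj \<tau>" and "\<tau> i = i"
  shows "flip i (x \<circ> \<tau>) = flip i x \<circ> \<tau>"
proof
  fix m
  have "\<tau> m = i \<longleftrightarrow> m = i"
    using assms by (metis injD)
  then show "flip i (x \<circ> \<tau>) m = (flip i x \<circ> \<tau>) m"
    using assms(2) by (auto simp: flip_def)
qed

lemma charfn_cong:
  "(\<And>x. x \<in> Upsilon n S v \<Longrightarrow> \<kappa> x = \<kappa>' x) \<Longrightarrow> charfn n \<kappa> v S = charfn n \<kappa>' v S"
  unfolding charfn_def by (rule cond_exp_cong) simp

lemma charfn_permute:
  assumes "\<tau> permutes feats n" and "\<And>j. v (\<tau> j) = v j"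
  shows "charfn n \<kappa> v T = charfn n (\<lambda>x. \<kappa> (x \<circ> \<tau>)) v (\<tau> ` T)"
  unfolding charfn_def by (rule cond_exp_permute[of \<tau> n v, OF assms])

lemma charfn_marginal_flip:
  assumes "i \<in> feats n" and "i \<notin> S"
  shows "charfn n \<kappa> v (insert i S) - charfn n \<kappa> v S =
    (charfn n \<kappa> v (insert i S) - charfn n (\<kappa> \<circ> flip i) v (insert i S)) / 2"
  unfolding charfn_def cond_exp_split_flip[OF assms] by (simp add: comp_def field_simps)

lemma shap_eq_0_if_permutation_flips:
  assumes i: "i \<in> feats n"
    and \<tau>: "\<tau> permutes feats n" "\<tau> i = i" and v: "\<And>j. v (\<tau> j) = v j"
    and \<kappa>: "\<And>x. x \<in> points n \<Longrightarrow> \<kappa> (x \<circ> \<tau>) = \<kappa> (flip i x)"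
  shows "shap n \<kappa> v i = 0"
proof -
  let ?P = "Pow (feats n - {i})"
  define \<Delta> where "\<Delta> S = charfn n \<kappa> v (insert i S) - charfn n \<kappa> v S" for S
  define w :: "nat set \<Rightarrow> real"
    where "w S = fact (card S) * fact (n - card S - 1) / fact n" for S
  have inj: "inj \<tau>"
    using \<tau>(1) by (rule permutes_inj)
  have \<Delta>_permute: "\<Delta> (\<tau> ` S) = - \<Delta> S" if "S \<in> ?P" for S
  proof -
    have "i \<notin> S" "i \<notin> \<tau> ` S"
      using that \<tau>(2) inj_image_mem_iff[OF inj, of i S] by auto
    have ins: "\<tau> ` insert i S = insert i (\<tau> ` S)"
      using \<tau>(2) by simp
    have \<kappa>_flip: "\<kappa> (flip i x \<circ> \<tau>) = \<kappa> x" if "x \<in> points n" for x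
      using \<kappa>[OF flip_in_points[OF that i]] by simp
    have "charfn n \<kappa> v (insert i S) = charfn n (\<kappa> \<circ> flip i) v (insert i (\<tau> ` S))"
      unfolding charfn_permute[of \<tau> n v \<kappa>, OF \<tau>(1) v] ins
      by (rule charfn_cong) (simp add: \<kappa> subsetD[OF Upsilon_subset_points])
    moreover have "charfn n (\<kappa> \<circ> flip i) v (insert i S) = charfn n \<kappa> v (insert i (\<tau> ` S))"
      unfolding charfn_permute[of \<tau> n v "\<kappa> \<circ> flip i", OF \<tau>(1) v] ins
      by (rule charfn_cong)
        (simp add: flip_comp[OF inj \<tau>(2)] \<kappa>_flip subsetD[OF Upsilon_subset_points])
    ultimately show ?thesis
      unfolding \<Delta>_def charfn_marginal_flip[OF i \<open>i \<notin> S\<close>]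
        charfn_marginal_flip[OF i \<open>i \<notin> \<tau> ` S\<close>]
      by (metis minus_diff_eq minus_divide_left)
  qed
  have "bij_betw \<tau> (feats n - {i}) (feats n - {i})"
    using \<tau> inj by (simp add: bij_betw_def inj_on_subset[OF inj subset_UNIV] image_set_diff permutes_image)
  then have bij: "bij_betw (image \<tau>) ?P ?P"
    by (rule bij_betw_Pow)
  have "(\<Sum>S\<in>?P. w S * \<Delta> S) = (\<Sum>S\<in>?P. w (\<tau> ` S) * \<Delta> (\<tau> ` S))"
    by (rule sum.reindex_bij_betw[OF bij, symmetric])
  also have "\<dots> = - (\<Sum>S\<in>?P. w S * \<Delta> S)"
    using inj by (simp add: \<Delta>_permute w_def card_image inj_on_subset sum_negf)
  finally have "(\<Sum>S\<in>?P. w S * \<Delta> S) = 0"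
    by simp
  then show ?thesis
    by (simp add: shap_def w_def \<Delta>_def)
qed

definition ones :: "nat \<Rightarrow> nat \<Rightarrow> bool" where
  "ones n = restrict (\<lambda>_. True) {1..n}"

definition disagree12_agree13 :: "(nat \<Rightarrow> bool) \<Rightarrow> bool" where
  "disagree12_agree13 x \<longleftrightarrow> x 2 \<noteq> x 1 \<and> x 3 = x 1"

lemma ones_in_points: "ones n \<in> points n"
  by (simp add: ones_def points_def)

lemma is_classifier_disagree12_agree13:
  assumes "3 \<le> n"
  shows "is_classifier n disagree12_agree13"
proof -
  let ?x = "(ones n)(2 := False)"
  have "?x \<in> points n"
    using assms by (intro fun_upd_in_points ones_in_points) (simp add: feats_def)
  moreover have "disagree12_agree13 ?x \<noteq> disagree12_agree13 (ones n)"
    using assms by (simp add: disagree12_agree13_def ones_def)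
  ultimately show ?thesis
    using ones_in_points unfolding is_classifier_def by blast
qed

lemma AXp_disagree12_agree13:
  assumes "3 \<le> n"
  shows "AXp n disagree12_agree13 (ones n) {1, 2}"
proof -
  let ?\<kappa> = disagree12_agree13 and ?v = "ones n"
  have v: "?v 1" "?v 2" "?v 3" and feats: "1 \<in> feats n" "2 \<in> feats n" "3 \<in> feats n"
    using assms by (auto simp: ones_def feats_def)
  note WAXp = WAXp_iff[OF ones_in_points]
  have "WAXp n ?\<kappa> ?v {1, 2}"
    using v feats by (auto simp: WAXp Upsilon_def disagree12_agree13_def)
  moreover have "\<not> WAXp n ?\<kappa> ?v {1}"
  proof -
    let ?x = "?v(2 := False)"
    have "?x \<in> Upsilon n {1} ?v"
      using fun_upd_in_points[OF ones_in_points feats(2)] by (simp add: Upsilon_def)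
    moreover have "?\<kappa> ?x \<noteq> ?\<kappa> ?v"
      using v by (simp add: disagree12_agree13_def)
    ultimately show ?thesis
      unfolding WAXp by blast
  qed
  moreover have "\<not> WAXp n ?\<kappa> ?v {2}"
  proof -
    let ?x = "?v(1 := False, 3 := False)"
    have "?x \<in> Upsilon n {2} ?v"
      using fun_upd_in_points[OF fun_upd_in_points[OF ones_in_points feats(1)] feats(3)]
      by (simp add: Upsilon_def)
    moreover have "?\<kappa> ?x \<noteq> ?\<kappa> ?v"
      using v by (simp add: disagree12_agree13_def)
    ultimately show ?thesis
      unfolding WAXp by blast
  qed
  ultimately show ?thesis
    by (auto simp: AXp_def insert_Diff_if)
qed

lemma shap_disagree12_agree13:
  assumes "3 \<le> n"
  shows "shap n disagree12_agree13 (ones n) 1 = 0"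
proof (rule shap_eq_0_if_permutation_flips[where \<tau> = "transpose 2 3"])
  show "transpose 2 3 permutes feats n"
    using assms by (intro permutes_swap_id) (auto simp: feats_def)
qed (use assms in \<open>auto simp: feats_def ones_def transpose_def disagree12_agree13_def flip_def\<close>)

theorem proposition2:
  fixes n :: nat
  assumes "odd n" and "n \<ge> 3"
  shows "\<exists>\<kappa> v. is_classifier n \<kappa> \<and> v \<in> points n \<and>
           (\<exists>i\<in>feats n. relevant n \<kappa> v i \<and> shap n \<kappa> v i = 0)"
proof -
  have "1 \<in> feats n"
    using assms(2) by (simp add: feats_def)
  moreover have "relevant n disagree12_agree13 (ones n) 1"
    using AXp_disagree12_agree13[OF assms(2)] unfolding relevant_def by blast
  moreover have "is_classifier n disagree12_agree13"
    using assms(2) by (rule is_classifier_disagree12_agree13)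
  ultimately show ?thesis
    using ones_in_points shap_disagree12_agree13[OF assms(2)] by blast
qed

end
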